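(* Let $\mathcal{M}(\mathcal{G})$ be the Bayesian Network represented by DAG $\mathcal{G}$ with vertex set $\mathbf{V}$. Assume $Y$ and $A$ are single disjoint vertices and $\mathrm{irrel}(A,Y,\mathcal{G})=\emptyset$. Then 1. If $J\geq1$ then for all $j\in\{1,\dots,J\}$, $E_P[J_{P,a,\mathcal{G}}\mid W_j,\mathrm{pa}_{\mathcal{G}}(W_j)]=E_P[b_a(\mathbf{O};P)\mid W_j,\mathrm{pa}_{\mathcal{G}}(W_j)]$. 2. If $K\geq1$ then for all $k\in\{1,\dots,K\}$, $E_P[J_{P,a,\mathcal{G}}\mid M_k,\mathrm{pa}_{\mathcal{G}}(M_k)]=E_P[T_{P,a,\mathcal{G}}\mid M_k,\mathrm{pa}_{\mathcal{G}}(M_k)]$. 3. $E_P[J_{P,a,\mathcal{G}}\mid Y,\mathrm{pa}_{\mathcal{G}}(Y)]=E_P[T_{P,a,\mathcal{G}}\mid Y,\mathrm{pa}_{\mathcal{G}}(Y)]$.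
   Context: $\mathcal{M}(\mathcal{G})$ is the set of laws satisfying the local Markov property w.r.t. $\mathcal{G}$; equalities hold for all $P\in\mathcal{M}(\mathcal{G})$. $\mathrm{pa}_{\mathcal{G}}$, $\mathrm{an}_{\mathcal{G}}$, $\mathrm{de}_{\mathcal{G}}$ denote parents, ancestors, descendants. $\mathrm{indir}(A,Y,\mathcal{G})=\{V\in\mathrm{an}_{\mathcal{G}}(A)\setminus\{A\}:\text{all causal paths from }V\text{ to }Y\text{ intersect }A\}$, $\mathrm{irrel}(A,Y,\mathcal{G})=\mathrm{indir}(A,Y,\mathcal{G})\cup\mathrm{an}_{\mathcal{G}}(Y)^c$. When $\mathrm{irrel}(A,Y,\mathcal{G})=\emptyset$, $\mathbf{V}$ is partitioned into $\mathbf{W}$ (non-descendants of $A$), $A$, $\mathbf{M}$ (mediators: vertices on causal paths between $A$ and $Y$ other than $A,Y$) and $Y$, topologically sorted as $(W_1,\dots,W_J,A,M_1,\dots,M_K,Y)$ ($J=0$ or $K=0$ if the set is empty). $\mathrm{cn}(A,Y,\mathcal{G})$ is the set of nodes on causal paths from $A$ to $Y$ other than $A$ and $\mathbf{O}=\mathbf{O}(A,Y,\mathcal{G})=\mathrm{pa}_{\mathcal{G}}(\mathrm{cn}(A,Y,\mathcal{G}))\setminus[\mathrm{de}_{\mathcal{G}}(\mathrm{cn}(A,Y,\mathcal{G}))\cup\{A\}]$. $A$ is discrete; $\pi_a(\mathbf{Z};P)=P(A=a\mid\mathbf{Z})$, $b_a(\mathbf{O};P)=E_P[Y\mid A=a,\mathbf{O}]$,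 $J_{P,a,\mathcal{G}}=\frac{I_a(A)Y}{P(A=a\mid\mathrm{pa}_{\mathcal{G}}(A))}$, $T_{P,a,\mathcal{G}}=\frac{I_a(A)Y}{\pi_a(\mathbf{O};P)}$. *)

theory Defs
  imports "HOL-Probability.Probability"
begin

text \<open>A DAG on a finite vertex set V with edge relation E (an edge (u,v) means u -> v).
  Ancestors and descendants include the vertex itself.\<close>

definition is_DAG :: "'v set \<Rightarrow> ('v \<times> 'v) set \<Rightarrow> bool" where
  "is_DAG V E \<longleftrightarrow> finite V \<and> E \<subseteq> V \<times> V \<and> acyclic E"

definition pa :: "('v \<times> 'v) set \<Rightarrow> 'v \<Rightarrow> 'v set" where
  "pa E v = {u. (u, v) \<in> E}"

definition pa_set :: "('v \<times> 'v) set \<Rightarrow> 'v set \<Rightarrow> 'v set" where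
  "pa_set E S = (\<Union>v\<in>S. pa E v)"

definition an :: "'v set \<Rightarrow> ('v \<times> 'v) set \<Rightarrow> 'v \<Rightarrow> 'v set" where
  "an V E v = {u \<in> V. (u, v) \<in> E\<^sup>*}"

definition de :: "'v set \<Rightarrow> ('v \<times> 'v) set \<Rightarrow> 'v \<Rightarrow> 'v set" where
  "de V E v = {u \<in> V. (v, u) \<in> E\<^sup>*}"

definition de_set :: "'v set \<Rightarrow> ('v \<times> 'v) set \<Rightarrow> 'v set \<Rightarrow> 'v set" where
  "de_set V E S = (\<Union>v\<in>S. de V E v)"

definition reach_avoiding :: "'v set \<Rightarrow> ('v \<times> 'v) set \<Rightarrow> 'v \<Rightarrow> 'v \<Rightarrow> 'v \<Rightarrow> bool" where
  "reach_avoiding V E A u w \<longleftrightarrow> (u, w) \<in> (Restr E (V - {A}))\<^sup>* \<and> u \<in> V - {A} \<and> w \<in> V - {A}"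

text \<open>indir(A,Y,G): ancestors V of A (other than A) such that every causal path from V to Y
  intersects A, i.e. there is no causal path from V to Y avoiding A.\<close>
definition indir :: "'v set \<Rightarrow> ('v \<times> 'v) set \<Rightarrow> 'v \<Rightarrow> 'v \<Rightarrow> 'v set" where
  "indir V E A Y = {u \<in> an V E A - {A}. \<not> reach_avoiding V E A u Y}"

definition irrel :: "'v set \<Rightarrow> ('v \<times> 'v) set \<Rightarrow> 'v \<Rightarrow> 'v \<Rightarrow> 'v set" where
  "irrel V E A Y = indir V E A Y \<union> (V - an V E Y)"

definition cn :: "'v set \<Rightarrow> ('v \<times> 'v) set \<Rightarrow> 'v \<Rightarrow> 'v \<Rightarrow> 'v set" where
  "cn V E A Y = {v \<in> V. v \<noteq> A \<and> (A, v) \<in> E\<^sup>* \<and> (v, Y) \<in> E\<^sup>*}"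

definition mediators :: "'v set \<Rightarrow> ('v \<times> 'v) set \<Rightarrow> 'v \<Rightarrow> 'v \<Rightarrow> 'v set" where
  "mediators V E A Y = cn V E A Y - {Y}"

definition nondesc :: "'v set \<Rightarrow> ('v \<times> 'v) set \<Rightarrow> 'v \<Rightarrow> 'v set" where
  "nondesc V E A = V - de V E A"

definition Oset :: "'v set \<Rightarrow> ('v \<times> 'v) set \<Rightarrow> 'v \<Rightarrow> 'v \<Rightarrow> 'v set" where
  "Oset V E A Y = pa_set E (cn V E A Y) - (de_set V E (cn V E A Y) \<union> {A})"

text \<open>sigma-algebra generated by the variables X v, v in S (trivial sigma-algebra if S is empty).\<close>
definition gen :: "'a measure \<Rightarrow> ('v \<Rightarrow> 'b measure) \<Rightarrow> ('v \<Rightarrow> 'a \<Rightarrow> 'b) \<Rightarrow> 'v set \<Rightarrow> 'a measure" where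
  "gen M N X S = sigma (space M) (\<Union>v\<in>S. {X v -` B \<inter> space M | B. B \<in> sets (N v)})"

definition cond_indep :: "'a measure \<Rightarrow> 'a measure \<Rightarrow> 'a measure \<Rightarrow> 'a measure \<Rightarrow> bool" where
  "cond_indep M F G H \<longleftrightarrow>
     (\<forall>A\<in>sets F. \<forall>B\<in>sets G. AE \<omega> in M.
        real_cond_exp M H (\<lambda>x. indicator A x * indicator B x) \<omega>
          = real_cond_exp M H (indicator A) \<omega> * real_cond_exp M H (indicator B) \<omega>)"

text \<open>P belongs to M(G): local Markov property: each X v is conditionally independent of its
  non-descendants (other than its parents) given its parents.\<close>
definition local_markov ::
  "'a measure \<Rightarrow> ('v \<Rightarrow> 'b measure) \<Rightarrow> ('v \<Rightarrow> 'a \<Rightarrow> 'b) \<Rightarrow> 'v set \<Rightarrow> ('v \<times> 'v) set \<Rightarrow> bool" where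
  "local_markov M N X V E \<longleftrightarrow>
     (\<forall>v\<in>V. cond_indep M (gen M N X {v}) (gen M N X (V - de V E v - pa E v)) (gen M N X (pa E v)))"

definition Ind :: "('v \<Rightarrow> 'a \<Rightarrow> 'b) \<Rightarrow> 'v \<Rightarrow> 'b \<Rightarrow> 'a \<Rightarrow> real" where
  "Ind X A a \<omega> = (if X A \<omega> = a then 1 else 0)"

definition prop_score ::
  "'a measure \<Rightarrow> ('v \<Rightarrow> 'b measure) \<Rightarrow> ('v \<Rightarrow> 'a \<Rightarrow> 'b) \<Rightarrow> 'v \<Rightarrow> 'b \<Rightarrow> 'v set \<Rightarrow> 'a \<Rightarrow> real" where
  "prop_score M N X A a Z = real_cond_exp M (gen M N X Z) (Ind X A a)"

text \<open>b_a(O;P) = E[Y | A = a, O] = E[I_a(A) Y | O] / P(A = a | O); Y is the real variable y(X Y).\<close>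
definition breg ::
  "'a measure \<Rightarrow> ('v \<Rightarrow> 'b measure) \<Rightarrow> ('v \<Rightarrow> 'a \<Rightarrow> 'b) \<Rightarrow> 'v \<Rightarrow> 'b \<Rightarrow> 'v \<Rightarrow> ('b \<Rightarrow> real) \<Rightarrow> 'v set \<Rightarrow> 'a \<Rightarrow> real" where
  "breg M N X A a Y y Os \<omega> =
     real_cond_exp M (gen M N X Os) (\<lambda>x. Ind X A a x * y (X Y x)) \<omega> / prop_score M N X A a Os \<omega>"

definition Jest ::
  "'a measure \<Rightarrow> ('v \<Rightarrow> 'b measure) \<Rightarrow> ('v \<Rightarrow> 'a \<Rightarrow> 'b) \<Rightarrow> ('v \<times> 'v) set \<Rightarrow> 'v \<Rightarrow> 'b \<Rightarrow> 'v \<Rightarrow> ('b \<Rightarrow> real) \<Rightarrow> 'a \<Rightarrow> real" where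
  "Jest M N X E A a Y y \<omega> = Ind X A a \<omega> * y (X Y \<omega>) / prop_score M N X A a (pa E A) \<omega>"

definition Test ::
  "'a measure \<Rightarrow> ('v \<Rightarrow> 'b measure) \<Rightarrow> ('v \<Rightarrow> 'a \<Rightarrow> 'b) \<Rightarrow> 'v set \<Rightarrow> ('v \<times> 'v) set \<Rightarrow> 'v \<Rightarrow> 'b \<Rightarrow> 'v \<Rightarrow> ('b \<Rightarrow> real) \<Rightarrow> 'a \<Rightarrow> real" where
  "Test M N X V E A a Y y \<omega> = Ind X A a \<omega> * y (X Y \<omega>) / prop_score M N X A a (Oset V E A Y) \<omega>"

end

theory Submission
  imports Defs
begin

(* Write W for the non-descendants of A, C for the nodes on causal paths from A to Y (Y among
   them) and O for the optimal adjustment set. The heart of the proof is that the variables of C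
   are conditionally independent of those of W given O and A. This is shown by adding the nodes
   of C one at a time in topological order: by the local Markov property a node depends on W, A
   and the earlier nodes only through its parents, and these lie in C, O or A.
   Consequently E[J | W, A] = I_a E[Y | O, A] / pi_a(pa A) = I_a b_a(O) / pi_a(pa A), and averaging
   over A with E[I_a | W] = pi_a(pa A) gives E[J | W] = b_a(O). Symmetrically,
   E[J | C, O, A] = Y E[I_a / pi_a(pa A) | O, A] = Y I_a / pi_a(O) = T, because
   E[I_a / pi_a(pa A) | W] = 1. All three claims then follow by the tower property: the family
   {v} \<union> pa v of a vertex of W lies in W, that of a vertex of C lies in C, O and A. *)

section \<open>Conditional expectations\<close>

lemma set_integral_eq_sigma_sets:
  fixes u v :: "'a \<Rightarrow> real"
  assumes Gen: "Int_stable Gen" "Gen \<subseteq> sets M" "space M \<in> Gen"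
    and u: "integrable M u" and v: "integrable M v"
    and eq: "\<And>D. D \<in> Gen \<Longrightarrow> (LINT x:D|M. u x) = (LINT x:D|M. v x)"
    and D: "D \<in> sigma_sets (space M) Gen"
  shows "(LINT x:D|M. u x) = (LINT x:D|M. v x)"
proof -
  have sets: "sigma_sets (space M) Gen \<subseteq> sets M"
    using Gen(2) by (rule sets.sigma_sets_subset)
  have int: "set_integrable M B f" if "B \<in> sets M" "integrable M f" for B and f :: "'a \<Rightarrow> real"
    using integrable_mult_indicator[OF that] unfolding set_integrable_def by simp
  have closed: "Gen \<subseteq> Pow (space M)" using Gen(2) sets.sets_into_space by auto
  from Gen(1) closed D show ?thesis
  proof (induction rule: sigma_sets_induct_disjoint)
    case (compl B)
    then have B: "B \<in> sets M" using sets by auto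
    have "(LINT x:space M - B|M. f x) = (LINT x:space M|M. f x) - (LINT x:B|M. f x)"
      if "integrable M f" for f :: "'a \<Rightarrow> real"
      using set_integral_Un[of B "space M - B" M f] int[OF B that] int[OF _ that] B
        sets.sets_into_space[OF B] by (simp add: Un_absorb1)
    then show ?case using u v eq[OF Gen(3)] compl.IH by simp
  next
    case (union B)
    then have B: "\<And>i. B i \<in> sets M" using sets by auto
    have "(LINT x:(\<Union>i. B i)|M. f x) = (\<Sum>i. LINT x:B i|M. f x)" if "integrable M f" for f :: "'a \<Rightarrow> real"
    proof (rule lebesgue_integral_countable_add[OF B])
      show "B i \<inter> B j = {}" if "i \<noteq> j" for i j
        using union.hyps(1) that unfolding disjoint_family_on_def by blast
      show "set_integrable M (\<Union>i. B i) f" using B by (intro int that) auto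
    qed
    then show ?case using u v union.IH by simp
  qed (use eq in \<open>auto simp: set_lebesgue_integral_def\<close>)
qed

context sigma_finite_subalgebra
begin

lemma nn_cond_exp_eq_real_cond_exp:
  fixes g :: "'a \<Rightarrow> real"
  assumes g: "integrable M g" and g_nonneg: "\<And>x. 0 \<le> g x"
  shows "AE x in M. nn_cond_exp M F (\<lambda>x. ennreal (g x)) x = ennreal (real_cond_exp M F g x)"
proof -
  have [measurable]: "g \<in> borel_measurable M" using g by simp
  have "AE x in M. nn_cond_exp M F (\<lambda>x. ennreal (- g x)) x = 0"
    using nn_cond_exp_F_meas[of "\<lambda>_. 0"] by (simp add: g_nonneg ennreal_neg)
  moreover have "(\<integral>\<^sup>+ x. nn_cond_exp M F (\<lambda>x. ennreal (g x)) x \<partial>M) = (\<integral>\<^sup>+ x. ennreal (g x) \<partial>M)"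
    using nn_cond_exp_intg[of "\<lambda>_. 1" "\<lambda>x. ennreal (g x)"] by simp
  then have "AE x in M. nn_cond_exp M F (\<lambda>x. ennreal (g x)) x \<noteq> \<infinity>"
    using g by (intro nn_integral_PInf_AE) (simp_all add: integrable_iff_bounded g_nonneg)
  ultimately show ?thesis
    by eventually_elim (simp add: real_cond_exp_def less_top)
qed

lemma integrable_mult_of_real_cond_exp:
  fixes f g :: "'a \<Rightarrow> real"
  assumes f[measurable]: "f \<in> borel_measurable F" and f_nonneg: "\<And>x. 0 \<le> f x"
    and g: "integrable M g" and g_nonneg: "\<And>x. 0 \<le> g x"
    and fg: "integrable M (\<lambda>x. f x * real_cond_exp M F g x)"
  shows "integrable M (\<lambda>x. f x * g x)"
proof (rule integrableI_bounded)
  have [measurable]: "f \<in> borel_measurable M" by (rule measurable_from_subalg[OF subalg f])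
  have [measurable]: "g \<in> borel_measurable M" using g by simp
  show "(\<lambda>x. f x * g x) \<in> borel_measurable M" by simp
  have "AE x in M. 0 \<le> real_cond_exp M F g x"
    by (rule real_cond_exp_pos) (simp_all add: g_nonneg)
  with nn_cond_exp_eq_real_cond_exp[OF g g_nonneg]
  have ae: "AE x in M. ennreal (f x) * nn_cond_exp M F (\<lambda>x. ennreal (g x)) x
                     = ennreal (norm (f x * real_cond_exp M F g x))"
    by eventually_elim (simp add: f_nonneg ennreal_mult abs_mult)
  have "(\<integral>\<^sup>+ x. ennreal (norm (f x * g x)) \<partial>M) = (\<integral>\<^sup>+ x. ennreal (f x) * ennreal (g x) \<partial>M)"
    by (rule nn_integral_cong) (simp add: f_nonneg g_nonneg ennreal_mult abs_mult)
  also have "\<dots> = (\<integral>\<^sup>+ x. ennreal (f x) * nn_cond_exp M F (\<lambda>x. ennreal (g x)) x \<partial>M)"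
    by (rule nn_cond_exp_intg[symmetric]) simp_all
  also have "\<dots> = (\<integral>\<^sup>+ x. ennreal (norm (f x * real_cond_exp M F g x)) \<partial>M)"
    using ae by (rule nn_integral_cong_AE)
  also have "\<dots> < \<infinity>" using fg by (simp add: integrable_iff_bounded)
  finally show "(\<integral>\<^sup>+ x. ennreal (norm (f x * g x)) \<partial>M) < \<infinity>" .
qed

lemma integrable_mult_real_cond_exp_ratio:
  fixes I k :: "'a \<Rightarrow> real"
  assumes I: "integrable M I" and I_nonneg: "\<And>x. 0 \<le> I x"
    and pos: "AE x in M. 0 < real_cond_exp M F I x" and k: "integrable M k"
  shows "integrable M (\<lambda>x. I x * (real_cond_exp M F k x / real_cond_exp M F I x))"
proof -
  let ?r = "\<lambda>x. real_cond_exp M F k x / real_cond_exp M F I x"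
  have [measurable]: "I \<in> borel_measurable M" using I by simp
  have r: "?r \<in> borel_measurable F" by simp
  then have [measurable]: "?r \<in> borel_measurable M" by (rule measurable_from_subalg[OF subalg])
  have int_k: "integrable M (\<lambda>x. \<bar>real_cond_exp M F k x\<bar>)" using real_cond_exp_int(1)[OF k] by simp
  have "AE x in M. \<bar>real_cond_exp M F k x\<bar> = \<bar>?r x\<bar> * real_cond_exp M F I x"
    using pos by eventually_elim (simp add: abs_div)
  then have int_rI: "integrable M (\<lambda>x. \<bar>?r x\<bar> * real_cond_exp M F I x)"
    by (intro integrable_cong_AE_imp[OF int_k]) simp_all
  have "integrable M (\<lambda>x. \<bar>?r x\<bar> * I x)"
    by (rule integrable_mult_of_real_cond_exp[OF _ _ I I_nonneg int_rI]) (simp_all add: r)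
  then show ?thesis
  proof (rule Bochner_Integration.integrable_bound)
    show "AE x in M. norm (I x * ?r x) \<le> norm (\<bar>?r x\<bar> * I x)"
      by (simp add: abs_mult I_nonneg mult.commute)
  qed simp
qed

lemma set_integral_mult_real_cond_exp_ratio:
  fixes I k :: "'a \<Rightarrow> real"
  assumes I: "integrable M I" and I_nonneg: "\<And>x. 0 \<le> I x"
    and pos: "AE x in M. 0 < real_cond_exp M F I x" and k: "integrable M k" and B: "B \<in> sets F"
  shows "(LINT x:B|M. k x) = (LINT x:B|M. I x * (real_cond_exp M F k x / real_cond_exp M F I x))"
proof -
  let ?r = "\<lambda>x. real_cond_exp M F k x / real_cond_exp M F I x"
  have r: "?r \<in> borel_measurable F" by simp
  then have [measurable]: "?r \<in> borel_measurable M" by (rule measurable_from_subalg[OF subalg])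
  have [measurable]: "B \<in> sets M" "I \<in> borel_measurable M" using B subalg I by (auto simp: subalgebra_def)
  have "(LINT x:B|M. k x) = (LINT x:B|M. real_cond_exp M F k x)"
    by (rule real_cond_exp_intA[OF k B])
  also have "\<dots> = (\<integral>x. (indicator B x * ?r x) * real_cond_exp M F I x \<partial>M)"
    unfolding set_lebesgue_integral_def using pos by (intro integral_cong_AE) auto
  also have "\<dots> = (\<integral>x. (indicator B x * ?r x) * I x \<partial>M)"
    using integrable_mult_indicator[OF \<open>B \<in> sets M\<close> integrable_mult_real_cond_exp_ratio[OF I I_nonneg pos k]]
      borel_measurable_times[OF borel_measurable_indicator[OF B] r]
    by (intro real_cond_exp_intg(2)) (simp_all add: mult_ac)
  also have "\<dots> = (LINT x:B|M. I x * ?r x)"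
    by (simp add: set_lebesgue_integral_def mult_ac)
  finally show ?thesis .
qed

end

(* For sets R \<subseteq> sets T this says that the events of \<D> are conditionally independent of T
   given R. *)
definition cond_exp_agree :: "'a measure \<Rightarrow> 'a measure \<Rightarrow> 'a measure \<Rightarrow> 'a set set \<Rightarrow> bool" where
  "cond_exp_agree M T R \<D> \<longleftrightarrow>
     (\<forall>D\<in>\<D>. AE x in M. real_cond_exp M T (indicator D) x = real_cond_exp M R (indicator D) x)"

context prob_space
begin

lemma sigma_finite_subalgebra_of_subalgebra:
  "subalgebra M F \<Longrightarrow> sigma_finite_subalgebra M F"
  by (rule finite_measure_subalgebra_is_sigma_finite)
     (simp add: finite_measure_subalgebra_def finite_measure_subalgebra_axioms_def finite_measure_axioms)

lemma integrable_indicator_real [simp]: "B \<in> sets M \<Longrightarrow> integrable M (indicator B :: 'a \<Rightarrow> real)"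
  by (simp add: less_top[symmetric])

lemma real_cond_exp_indicator_abs_le_1:
  assumes "subalgebra M F" and "B \<in> sets M"
  shows "AE x in M. \<bar>real_cond_exp M F (indicator B) x\<bar> \<le> 1"
proof -
  interpret F: sigma_finite_subalgebra M F by (rule sigma_finite_subalgebra_of_subalgebra) fact
  have "integrable M (indicator B :: 'a \<Rightarrow> real)" using assms(2) by simp
  then have "AE x in M. 0 \<le> real_cond_exp M F (indicator B) x"
    and "AE x in M. real_cond_exp M F (indicator B) x \<le> 1"
    by (auto intro!: F.real_cond_exp_ge_c F.real_cond_exp_le_c split: split_indicator)
  then show ?thesis by eventually_elim auto
qed

lemma real_cond_exp_indicator_self_adjoint:
  fixes h :: "'a \<Rightarrow> real"
  assumes F: "subalgebra M F" and B[measurable]: "B \<in> sets M" and h: "integrable M h"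
  shows "(\<integral>x. h x * real_cond_exp M F (indicator B) x \<partial>M) = (LINT x:B|M. real_cond_exp M F h x)"
proof -
  interpret F: sigma_finite_subalgebra M F by (rule sigma_finite_subalgebra_of_subalgebra) fact
  let ?e = "real_cond_exp M F (indicator B)"
  have [measurable]: "h \<in> borel_measurable M" using h by simp
  have "integrable M (\<lambda>x. ?e x * h x)"
  proof (rule Bochner_Integration.integrable_bound[OF h])
    show "AE x in M. norm (?e x * h x) \<le> norm (h x)"
      using real_cond_exp_indicator_abs_le_1[OF F B]
      by eventually_elim (auto simp: abs_mult intro: mult_left_le_one_le)
  qed simp
  then have "(\<integral>x. ?e x * h x \<partial>M) = (\<integral>x. ?e x * real_cond_exp M F h x \<partial>M)"
    by (intro F.real_cond_exp_intg(2)[symmetric]) simp_all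
  also have "\<dots> = (\<integral>x. real_cond_exp M F h x * indicator B x \<partial>M)"
    using integrable_mult_indicator[OF B F.real_cond_exp_int(1)[OF h]]
    by (subst F.real_cond_exp_intg(2)[symmetric]) (simp_all add: mult.commute)
  finally show ?thesis by (simp add: set_lebesgue_integral_def mult.commute)
qed

lemma set_integral_Int_cond_indep:
  assumes F: "subalgebra M F" and B[measurable]: "B \<in> sets M" and C: "C \<in> sets F"
    and D[measurable]: "D \<in> sets M"
    and indep: "AE x in M. real_cond_exp M F (\<lambda>x. indicator D x * indicator B x) x
                         = real_cond_exp M F (indicator D) x * real_cond_exp M F (indicator B) x"
  shows "(LINT x:B \<inter> C|M. indicator D x) = (LINT x:B \<inter> C|M. real_cond_exp M F (indicator D) x)"
proof -
  interpret F: sigma_finite_subalgebra M F by (rule sigma_finite_subalgebra_of_subalgebra) fact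
  let ?e = "real_cond_exp M F (indicator D)"
  have [measurable]: "C \<in> sets M" using F C by (auto simp: subalgebra_def)
  have "(LINT x:B \<inter> C|M. indicator D x) = (\<integral>x. indicator C x * (indicator D x * indicator B x) \<partial>M :: real)"
    unfolding set_lebesgue_integral_def
    by (rule Bochner_Integration.integral_cong) (simp_all split: split_indicator)
  also have "\<dots> = (\<integral>x. indicator C x * real_cond_exp M F (\<lambda>x. indicator D x * indicator B x) x \<partial>M)"
    using C integrable_mult_indicator[OF \<open>C \<in> sets M\<close> integrable_mult_indicator[OF D
          integrable_indicator_real[OF B]]]
    by (intro F.real_cond_exp_intg(2)[symmetric]) simp_all
  also have "\<dots> = (\<integral>x. (indicator C x * ?e x) * real_cond_exp M F (indicator B) x \<partial>M)"
    using indep by (intro integral_cong_AE) (auto simp: mult.assoc)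
  also have "\<dots> = (\<integral>x. (indicator C x * ?e x) * indicator B x \<partial>M)"
    using C integrable_mult_indicator[OF B integrable_mult_indicator[OF \<open>C \<in> sets M\<close>
          F.real_cond_exp_int(1)[OF integrable_indicator_real[OF D]]]]
    by (intro F.real_cond_exp_intg(2)) (simp_all add: mult_ac)
  also have "\<dots> = (LINT x:B \<inter> C|M. ?e x)"
    unfolding set_lebesgue_integral_def
    by (rule Bochner_Integration.integral_cong) (simp_all split: split_indicator)
  finally show ?thesis .
qed

lemma set_integral_indicator_eq_cond_exp:
  assumes T: "subalgebra M T" and R: "subalgebra M R"
    and B: "B \<in> sets T" and D[measurable]: "D \<in> sets M"
    and agree: "AE x in M. real_cond_exp M T (indicator D) x = real_cond_exp M R (indicator D) x"
  shows "(LINT x:D|M. indicator B x) = (LINT x:D|M. real_cond_exp M R (indicator B) x)"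
proof -
  interpret T: sigma_finite_subalgebra M T by (rule sigma_finite_subalgebra_of_subalgebra) fact
  have BM[measurable]: "B \<in> sets M" using T B by (auto simp: subalgebra_def)
  have "(LINT x:D|M. indicator B x) = (\<integral>x. indicator B x * indicator D x \<partial>M :: real)"
    by (simp add: set_lebesgue_integral_def mult.commute)
  also have "\<dots> = (\<integral>x. indicator B x * real_cond_exp M T (indicator D) x \<partial>M)"
    using integrable_mult_indicator[OF BM integrable_indicator_real[OF D]] B
    by (intro T.real_cond_exp_intg(2)[symmetric]) simp_all
  also have "\<dots> = (\<integral>x. indicator B x * real_cond_exp M R (indicator D) x \<partial>M)"
    using agree by (intro integral_cong_AE) auto
  also have "\<dots> = (LINT x:D|M. real_cond_exp M R (indicator B) x)"
    by (rule real_cond_exp_indicator_self_adjoint[OF R D]) simp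
  finally show ?thesis .
qed

lemma cond_exp_agree_sym:
  assumes T: "subalgebra M T" and R: "subalgebra M R" and S: "subalgebra M S"
    and RS: "subalgebra S R" and agree: "cond_exp_agree M T R (sets S)"
  shows "cond_exp_agree M S R (sets T)"
  unfolding cond_exp_agree_def
proof
  interpret S: sigma_finite_subalgebra M S by (rule sigma_finite_subalgebra_of_subalgebra) fact
  interpret R: sigma_finite_subalgebra M R by (rule sigma_finite_subalgebra_of_subalgebra) fact
  fix D assume D: "D \<in> sets T"
  then have [measurable]: "D \<in> sets M" using T by (auto simp: subalgebra_def)
  show "AE x in M. real_cond_exp M S (indicator D) x = real_cond_exp M R (indicator D) x"
  proof (rule S.real_cond_exp_charact)
    fix B assume "B \<in> sets S"
    then show "(LINT x:B|M. indicator D x) = (LINT x:B|M. real_cond_exp M R (indicator D) x)"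
      using agree S by (intro set_integral_indicator_eq_cond_exp[OF T R D])
        (auto simp: cond_exp_agree_def subalgebra_def)
  qed (auto intro: measurable_from_subalg[OF RS])
qed

lemma real_cond_exp_eq_of_cond_exp_agree:
  fixes f :: "'a \<Rightarrow> real"
  assumes T: "subalgebra M T" and R: "subalgebra M R" and S: "subalgebra M S"
    and RT: "subalgebra T R" and RS: "subalgebra S R" and agree: "cond_exp_agree M T R (sets S)"
    and f: "integrable M f" and fS: "f \<in> borel_measurable S"
  shows "AE x in M. real_cond_exp M T f x = real_cond_exp M R f x"
proof -
  interpret T: sigma_finite_subalgebra M T by (rule sigma_finite_subalgebra_of_subalgebra) fact
  interpret S: sigma_finite_subalgebra M S by (rule sigma_finite_subalgebra_of_subalgebra) fact
  interpret R: sigma_finite_subalgebra M R by (rule sigma_finite_subalgebra_of_subalgebra) fact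
  have [measurable]: "f \<in> borel_measurable M" using f by simp
  show ?thesis
  proof (rule T.real_cond_exp_charact)
    fix B assume B: "B \<in> sets T"
    then have BM[measurable]: "B \<in> sets M" using T by (auto simp: subalgebra_def)
    have agree_B: "AE x in M. real_cond_exp M S (indicator B) x = real_cond_exp M R (indicator B) x"
      using cond_exp_agree_sym[OF T R S RS agree] B by (auto simp: cond_exp_agree_def)
    have "(LINT x:B|M. f x) = (\<integral>x. f x * indicator B x \<partial>M)"
      by (simp add: set_lebesgue_integral_def mult.commute)
    also have "\<dots> = (\<integral>x. f x * real_cond_exp M S (indicator B) x \<partial>M)"
      using integrable_mult_indicator[OF BM f] fS
      by (intro S.real_cond_exp_intg(2)[symmetric]) (simp_all add: mult.commute)
    also have "\<dots> = (\<integral>x. f x * real_cond_exp M R (indicator B) x \<partial>M)"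
      using agree_B by (intro integral_cong_AE) auto
    also have "\<dots> = (LINT x:B|M. real_cond_exp M R f x)"
      by (rule real_cond_exp_indicator_self_adjoint[OF R BM f])
    finally show "(LINT x:B|M. f x) = (LINT x:B|M. real_cond_exp M R f x)" .
  qed (use f in \<open>auto intro: measurable_from_subalg[OF RT]\<close>)
qed

lemma cond_exp_agree_sigma_sets:
  assumes T: "subalgebra M T" and R: "subalgebra M R" and RT: "subalgebra T R"
    and Gen: "Int_stable Gen" "Gen \<subseteq> sets M" "space M \<in> Gen"
    and agree: "cond_exp_agree M T R Gen"
  shows "cond_exp_agree M T R (sigma_sets (space M) Gen)"
  unfolding cond_exp_agree_def
proof
  interpret T: sigma_finite_subalgebra M T by (rule sigma_finite_subalgebra_of_subalgebra) fact
  interpret R: sigma_finite_subalgebra M R by (rule sigma_finite_subalgebra_of_subalgebra) fact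
  fix D assume D: "D \<in> sigma_sets (space M) Gen"
  then have DM[measurable]: "D \<in> sets M" using sets.sigma_sets_subset[OF Gen(2)] by auto
  show "AE x in M. real_cond_exp M T (indicator D) x = real_cond_exp M R (indicator D) x"
  proof (rule T.real_cond_exp_charact)
    fix B assume B: "B \<in> sets T"
    then have BM[measurable]: "B \<in> sets M" using T by (auto simp: subalgebra_def)
    have "(LINT x:B|M. indicator D x) = (LINT x:D|M. indicator B x :: real)"
      by (simp add: set_lebesgue_integral_def mult.commute)
    also have "\<dots> = (LINT x:D|M. real_cond_exp M R (indicator B) x)"
    proof (rule set_integral_eq_sigma_sets[OF Gen _ _ _ D])
      fix D' assume "D' \<in> Gen"
      then show "(LINT x:D'|M. indicator B x) = (LINT x:D'|M. real_cond_exp M R (indicator B) x)"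
        using agree Gen(2) by (intro set_integral_indicator_eq_cond_exp[OF T R B])
          (auto simp: cond_exp_agree_def)
    qed auto
    also have "\<dots> = (\<integral>x. indicator B x * real_cond_exp M R (indicator D) x \<partial>M)"
      by (rule real_cond_exp_indicator_self_adjoint[OF R DM, symmetric]) simp
    also have "\<dots> = (LINT x:B|M. real_cond_exp M R (indicator D) x)"
      by (simp add: set_lebesgue_integral_def)
    finally show "(LINT x:B|M. indicator D x) = (LINT x:B|M. real_cond_exp M R (indicator D) x)" .
  qed (auto intro: measurable_from_subalg[OF RT])
qed

lemma cond_exp_agree_self:
  assumes T: "subalgebra M T" and R: "subalgebra M R" and RT: "subalgebra T R"
  shows "cond_exp_agree M T R (sets R)"
  unfolding cond_exp_agree_def
proof
  interpret T: sigma_finite_subalgebra M T by (rule sigma_finite_subalgebra_of_subalgebra) fact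
  interpret R: sigma_finite_subalgebra M R by (rule sigma_finite_subalgebra_of_subalgebra) fact
  fix D assume D: "D \<in> sets R"
  then have "D \<in> sets T" "D \<in> sets M" using RT R by (auto simp: subalgebra_def)
  then have "AE x in M. real_cond_exp M T (indicator D) x = indicator D x"
    and "AE x in M. real_cond_exp M R (indicator D) x = indicator D x"
    using D by (auto intro!: T.real_cond_exp_F_meas R.real_cond_exp_F_meas)
  then show "AE x in M. real_cond_exp M T (indicator D) x = real_cond_exp M R (indicator D) x"
    by eventually_elim simp
qed

lemma cond_exp_agree_mono:
  assumes T': "subalgebra M T'" and T: "subalgebra M T" and R: "subalgebra M R"
    and TT': "subalgebra T' T" and RT: "subalgebra T R"
    and agree: "cond_exp_agree M T' R \<D>" and \<D>: "\<D> \<subseteq> sets M"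
  shows "cond_exp_agree M T R \<D>"
  unfolding cond_exp_agree_def
proof
  interpret T: sigma_finite_subalgebra M T by (rule sigma_finite_subalgebra_of_subalgebra) fact
  interpret R: sigma_finite_subalgebra M R by (rule sigma_finite_subalgebra_of_subalgebra) fact
  fix D assume D: "D \<in> \<D>"
  then have [measurable]: "D \<in> sets M" using \<D> by auto
  have "AE x in M. real_cond_exp M T (real_cond_exp M T' (indicator D)) x = real_cond_exp M T (indicator D) x"
    by (rule T.real_cond_exp_nested_subalg[OF T' TT']) simp
  moreover have "AE x in M. real_cond_exp M T (real_cond_exp M T' (indicator D)) x
                          = real_cond_exp M T (real_cond_exp M R (indicator D)) x"
    using agree D unfolding cond_exp_agree_def by (intro T.real_cond_exp_cong) auto
  moreover have "AE x in M. real_cond_exp M T (real_cond_exp M R (indicator D)) x = real_cond_exp M R (indicator D) x"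
    by (intro T.real_cond_exp_F_meas R.real_cond_exp_int measurable_from_subalg[OF RT]) simp_all
  ultimately show "AE x in M. real_cond_exp M T (indicator D) x = real_cond_exp M R (indicator D) x"
    by eventually_elim simp
qed

end

section \<open>Sigma-algebras generated by vertex variables\<close>

locale vertex_variables = prob_space M for M :: "'a measure" +
  fixes N :: "'v \<Rightarrow> 'b measure" and X :: "'v \<Rightarrow> 'a \<Rightarrow> 'b" and V :: "'v set"
  assumes measurable_X: "\<And>v. v \<in> V \<Longrightarrow> X v \<in> measurable M (N v)"
begin

abbreviation \<F> :: "'v set \<Rightarrow> 'a measure" where "\<F> S \<equiv> gen M N X S"

lemma space_gen [simp]: "space (\<F> S) = space M"
  unfolding gen_def by (rule space_measure_of) auto

lemma sets_gen: "sets (\<F> S) = sigma_sets (space M) (\<Union>v\<in>S. {X v -` B \<inter> space M | B. B \<in> sets (N v)})"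
  unfolding gen_def by (rule sets_measure_of) auto

lemma subalgebra_gen: "S \<subseteq> V \<Longrightarrow> subalgebra M (\<F> S)"
  unfolding subalgebra_def sets_gen using measurable_X
  by (auto intro!: sets.sigma_sets_subset measurable_sets)

lemma subalgebra_gen_mono: "S \<subseteq> T \<Longrightarrow> subalgebra (\<F> T) (\<F> S)"
  unfolding subalgebra_def sets_gen by (auto intro!: sigma_sets_mono')

lemma sets_gen_mono: "S \<subseteq> T \<Longrightarrow> D \<in> sets (\<F> S) \<Longrightarrow> D \<in> sets (\<F> T)"
  using subalgebra_gen_mono by (auto simp: subalgebra_def)

lemma measurable_gen_mono: "S \<subseteq> T \<Longrightarrow> f \<in> borel_measurable (\<F> S) \<Longrightarrow> f \<in> borel_measurable (\<F> T)"
  by (rule measurable_from_subalg[OF subalgebra_gen_mono])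

lemma measurable_X_gen:
  assumes "v \<in> S" and "v \<in> V"
  shows "X v \<in> measurable (\<F> S) (N v)"
proof (rule measurableI)
  show "X v x \<in> space (N v)" if "x \<in> space (\<F> S)" for x
    using that measurable_space[OF measurable_X[OF \<open>v \<in> V\<close>]] by simp
  show "X v -` B \<inter> space (\<F> S) \<in> sets (\<F> S)" if "B \<in> sets (N v)" for B
    unfolding sets_gen using assms(1) that by (auto intro!: sigma_sets.Basic)
qed

lemma sets_gen_singleton:
  assumes "v \<in> V"
  shows "sets (\<F> {v}) = {X v -` B \<inter> space M | B. B \<in> sets (N v)}"
proof -
  have "X v \<in> space M \<rightarrow> space (N v)" using measurable_space[OF measurable_X[OF assms]] by blast
  then show ?thesis using sets_vimage_algebra2 by (simp add: sets_gen sets_vimage_algebra)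
qed

definition rectangles :: "'v set \<Rightarrow> 'v set \<Rightarrow> 'a set set" where
  "rectangles S T = {B \<inter> C | B C. B \<in> sets (\<F> S) \<and> C \<in> sets (\<F> T)}"

lemma Int_stable_rectangles: "Int_stable (rectangles S T)"
  unfolding Int_stable_def rectangles_def
proof safe
  fix B C B' C' assume "B \<in> sets (\<F> S)" "C \<in> sets (\<F> T)" "B' \<in> sets (\<F> S)" "C' \<in> sets (\<F> T)"
  then show "\<exists>B'' C''. B \<inter> C \<inter> (B' \<inter> C') = B'' \<inter> C'' \<and> B'' \<in> sets (\<F> S) \<and> C'' \<in> sets (\<F> T)"
    by (intro exI[of _ "B \<inter> B'"] exI[of _ "C \<inter> C'"]) auto
qed

lemma rectangles_subset_sets: "S \<subseteq> V \<Longrightarrow> T \<subseteq> V \<Longrightarrow> rectangles S T \<subseteq> sets M"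
  unfolding rectangles_def using subalgebra_gen[of S] subalgebra_gen[of T]
  by (auto simp: subalgebra_def intro!: sets.Int)

lemma space_in_rectangles: "space M \<in> rectangles S T"
  unfolding rectangles_def using sets.top[of "\<F> S"] sets.top[of "\<F> T"] by force

lemma sets_gen_Un: "sets (\<F> (S \<union> T)) = sigma_sets (space M) (rectangles S T)"
proof
  have "rectangles S T \<subseteq> sets (\<F> (S \<union> T))"
    unfolding rectangles_def by (auto intro: sets_gen_mono)
  then show "sigma_sets (space M) (rectangles S T) \<subseteq> sets (\<F> (S \<union> T))"
    using sets.sigma_sets_subset[of "rectangles S T" "\<F> (S \<union> T)"] by simp
next
  have "X v -` B \<inter> space M \<in> rectangles S T" if "v \<in> S \<union> T" "B \<in> sets (N v)" for v B
  proof -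
    let ?D = "X v -` B \<inter> space M"
    have D: "?D \<in> sets (\<F> {v})" unfolding sets_gen using that by blast
    show ?thesis
    proof (cases "v \<in> S")
      case True
      then have "?D = ?D \<inter> space M" "?D \<in> sets (\<F> S)" "space M \<in> sets (\<F> T)"
        using sets_gen_mono[OF _ D, of S] sets.top[of "\<F> T"] by auto
      then show ?thesis unfolding rectangles_def by blast
    next
      case False
      then have "?D = space M \<inter> ?D" "space M \<in> sets (\<F> S)" "?D \<in> sets (\<F> T)"
        using that sets_gen_mono[OF _ D, of T] sets.top[of "\<F> S"] by auto
      then show ?thesis unfolding rectangles_def by blast
    qed
  qed
  then show "sets (\<F> (S \<union> T)) \<subseteq> sigma_sets (space M) (rectangles S T)"
    unfolding sets_gen by (intro sigma_sets_mono) (auto intro: sigma_sets.Basic)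
qed

lemma cond_exp_agree_of_cond_indep:
  assumes S: "S \<subseteq> V" and T: "T \<subseteq> V" and P: "P \<subseteq> V"
    and indep: "cond_indep M (\<F> S) (\<F> T) (\<F> P)"
  shows "cond_exp_agree M (\<F> (T \<union> P)) (\<F> P) (sets (\<F> S))"
  unfolding cond_exp_agree_def
proof
  interpret TP: sigma_finite_subalgebra M "\<F> (T \<union> P)"
    using T P by (intro sigma_finite_subalgebra_of_subalgebra subalgebra_gen) auto
  interpret P: sigma_finite_subalgebra M "\<F> P"
    using P by (intro sigma_finite_subalgebra_of_subalgebra subalgebra_gen)
  fix D assume D: "D \<in> sets (\<F> S)"
  then have [measurable]: "D \<in> sets M" using subalgebra_gen[OF S] by (auto simp: subalgebra_def)
  let ?e = "real_cond_exp M (\<F> P) (indicator D)"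
  show "AE x in M. real_cond_exp M (\<F> (T \<union> P)) (indicator D) x = ?e x"
  proof (rule TP.real_cond_exp_charact)
    fix A' assume "A' \<in> sets (\<F> (T \<union> P))"
    then show "(LINT x:A'|M. indicator D x) = (LINT x:A'|M. ?e x)"
      unfolding sets_gen_Un
    proof (rule set_integral_eq_sigma_sets[OF Int_stable_rectangles rectangles_subset_sets[OF T P]
          space_in_rectangles, rotated -1])
      fix BC assume "BC \<in> rectangles T P"
      then obtain B C where BC: "BC = B \<inter> C" and B: "B \<in> sets (\<F> T)" and C: "C \<in> sets (\<F> P)"
        unfolding rectangles_def by auto
      have B_M: "B \<in> sets M" using B subalgebra_gen[OF T] by (auto simp: subalgebra_def)
      have "AE x in M. real_cond_exp M (\<F> P) (\<lambda>x. indicator D x * indicator B x) x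
                     = ?e x * real_cond_exp M (\<F> P) (indicator B) x"
        using indep D B unfolding cond_indep_def by blast
      then show "(LINT x:BC|M. indicator D x) = (LINT x:BC|M. ?e x)"
        unfolding BC by (rule set_integral_Int_cond_indep[OF subalgebra_gen[OF P] B_M C \<open>D \<in> sets M\<close>])
    qed (simp_all add: P.real_cond_exp_int(1))
  qed (simp_all add: P.real_cond_exp_int(1) measurable_gen_mono[of P "T \<union> P"])
qed

lemma Ind_measurable_gen:
  assumes "A \<in> S" "A \<in> V" "{a} \<in> sets (N A)"
  shows "Ind X A a \<in> borel_measurable (\<F> S)"
proof -
  have "X A -` {a} \<inter> space (\<F> S) \<in> sets (\<F> S)"
    using measurable_sets[OF measurable_X_gen[OF assms(1,2)] assms(3)] .
  moreover have "Ind X A a = indicator {x. X A x = a}"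
    by (auto simp: Ind_def fun_eq_iff)
  ultimately show ?thesis
    by (simp add: borel_measurable_indicator_iff vimage_def Int_def)
qed

lemma Ind_integrable:
  assumes "A \<in> V" "{a} \<in> sets (N A)"
  shows "integrable M (Ind X A a)"
proof (rule Bochner_Integration.integrable_bound[of M "\<lambda>_. 1::real"])
  show "Ind X A a \<in> borel_measurable M"
    using measurable_from_subalg[OF subalgebra_gen Ind_measurable_gen, of "{A}"] assms by auto
qed (auto simp: Ind_def)

lemma set_integral_Ind_rectangle:
  fixes h :: "'a \<Rightarrow> real"
  shows "(LINT x:B \<inter> (X A -` S \<inter> space M)|M. Ind X A a x * h x)
       = (if a \<in> S then LINT x:B|M. Ind X A a x * h x else 0)"
proof (cases "a \<in> S")
  case True
  then show ?thesis unfolding set_lebesgue_integral_def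
    by (auto simp: Ind_def split: split_indicator intro!: Bochner_Integration.integral_cong)
next
  case False
  then have "(LINT x:B \<inter> (X A -` S \<inter> space M)|M. Ind X A a x * h x) = (\<integral>x. 0 \<partial>M)"
    unfolding set_lebesgue_integral_def
    by (intro Bochner_Integration.integral_cong) (auto simp: Ind_def split: split_indicator)
  then show ?thesis using False by simp
qed

lemma real_cond_exp_Ind_mult:
  fixes g :: "'a \<Rightarrow> real"
  assumes A: "A \<in> V" "{a} \<in> sets (N A)" and Z: "Z \<subseteq> V"
    and pos: "AE x in M. 0 < prop_score M N X A a Z x"
    and [measurable]: "g \<in> borel_measurable M" and Ig: "integrable M (\<lambda>x. Ind X A a x * g x)"
  shows "AE x in M. real_cond_exp M (\<F> (Z \<union> {A})) (\<lambda>x. Ind X A a x * g x) x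
      = Ind X A a x * (real_cond_exp M (\<F> Z) (\<lambda>x. Ind X A a x * g x) x / prop_score M N X A a Z x)"
proof -
  interpret Z: sigma_finite_subalgebra M "\<F> Z"
    using Z by (intro sigma_finite_subalgebra_of_subalgebra subalgebra_gen)
  interpret ZA: sigma_finite_subalgebra M "\<F> (Z \<union> {A})"
    using Z A by (intro sigma_finite_subalgebra_of_subalgebra subalgebra_gen) auto
  \<comment> \<open>A generating rectangle B \<inter> {X A \<in> S} of \<F> (Z \<union> {A}) meets {X A = a} in B \<inter> {X A = a}
    or not at all, so it suffices to integrate over the sets B of \<F> Z.\<close>
  let ?I = "Ind X A a"
  let ?r = "\<lambda>x. real_cond_exp M (\<F> Z) (\<lambda>x. ?I x * g x) x / prop_score M N X A a Z x"
  have I: "?I \<in> borel_measurable (\<F> (Z \<union> {A}))" using A by (intro Ind_measurable_gen) auto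
  then have [measurable]: "?I \<in> borel_measurable M" by (rule measurable_from_subalg[OF ZA.subalg])
  have r: "?r \<in> borel_measurable (\<F> Z)" unfolding prop_score_def by simp
  have Ir_int: "integrable M (\<lambda>x. ?I x * ?r x)"
    using Z.integrable_mult_real_cond_exp_ratio[OF Ind_integrable[OF A] _ pos[unfolded prop_score_def] Ig]
    by (simp add: Ind_def prop_score_def)
  have on_Z: "(LINT x:B|M. ?I x * g x) = (LINT x:B|M. ?I x * ?r x)" if "B \<in> sets (\<F> Z)" for B
    using Z.set_integral_mult_real_cond_exp_ratio[OF Ind_integrable[OF A] _ pos[unfolded prop_score_def] Ig that]
    by (simp add: Ind_def prop_score_def)
  show ?thesis
  proof (rule ZA.real_cond_exp_charact)
    fix D assume "D \<in> sets (\<F> (Z \<union> {A}))"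
    then show "(LINT x:D|M. ?I x * g x) = (LINT x:D|M. ?I x * ?r x)"
      unfolding sets_gen_Un
    proof (rule set_integral_eq_sigma_sets[OF Int_stable_rectangles rectangles_subset_sets
          space_in_rectangles, rotated -1])
      fix BC assume "BC \<in> rectangles Z {A}"
      then obtain B S where BC: "BC = B \<inter> (X A -` S \<inter> space M)" and B: "B \<in> sets (\<F> Z)"
        unfolding rectangles_def sets_gen_singleton[OF A(1)] by auto
      show "(LINT x:BC|M. ?I x * g x) = (LINT x:BC|M. ?I x * ?r x)"
        by (simp only: BC set_integral_Ind_rectangle on_Z[OF B])
    qed (use Z A Ig Ir_int in auto)
  qed (use Ig Ir_int borel_measurable_times[OF I measurable_gen_mono[OF _ r, of "Z \<union> {A}"]] in auto)
qed

lemma prop_score_measurable_gen: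
  assumes "Z \<subseteq> S"
  shows "prop_score M N X A a Z \<in> borel_measurable (\<F> S)"
  unfolding prop_score_def by (rule measurable_gen_mono[OF assms borel_measurable_cond_exp])

lemma breg_measurable_gen: "Z \<subseteq> S \<Longrightarrow> breg M N X A a Y y Z \<in> borel_measurable (\<F> S)"
  unfolding breg_def
  by (intro borel_measurable_divide prop_score_measurable_gen measurable_gen_mono[OF _ borel_measurable_cond_exp])

lemma real_cond_exp_gen_tower:
  assumes S: "S \<subseteq> S'" "S' \<subseteq> V" and f: "integrable M f"
    and eq: "AE x in M. real_cond_exp M (\<F> S') f x = g x" and [measurable]: "g \<in> borel_measurable M"
  shows "AE x in M. real_cond_exp M (\<F> S) f x = real_cond_exp M (\<F> S) g x"
proof -
  interpret S: sigma_finite_subalgebra M "\<F> S"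
    using S by (intro sigma_finite_subalgebra_of_subalgebra subalgebra_gen) auto
  have "AE x in M. real_cond_exp M (\<F> S) (real_cond_exp M (\<F> S') f) x = real_cond_exp M (\<F> S) f x"
    using S f by (intro S.real_cond_exp_nested_subalg subalgebra_gen subalgebra_gen_mono) auto
  moreover have "AE x in M. real_cond_exp M (\<F> S) (real_cond_exp M (\<F> S') f) x = real_cond_exp M (\<F> S) g x"
    using eq by (intro S.real_cond_exp_cong) auto
  ultimately show ?thesis by eventually_elim simp
qed

end

section \<open>The local Markov property\<close>

locale bayes_net = vertex_variables M N X V for M :: "'a measure" and N :: "'v \<Rightarrow> 'b measure" and X V +
  fixes E :: "('v \<times> 'v) set"
  assumes DAG: "is_DAG V E" and markov: "local_markov M N X V E"
begin

lemma edges_subset: "E \<subseteq> V \<times> V" and finite_V: "finite V" and acyclic_E: "acyclic E"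
  using DAG unfolding is_DAG_def by auto

lemma pa_subset: "pa E v \<subseteq> V"
  using edges_subset unfolding pa_def by auto

lemma pa_not_de: "p \<in> pa E v \<Longrightarrow> p \<notin> de V E v"
  using acyclic_E unfolding pa_def de_def acyclic_def
  by (auto dest: rtrancl_into_trancl2)

lemma not_in_pa_self: "v \<notin> pa E v"
  using acyclic_E unfolding pa_def acyclic_def by auto

lemma exists_maximal:
  assumes "Q \<noteq> {}"
  shows "\<exists>c\<in>Q. \<forall>q\<in>Q. (c, q) \<notin> E\<^sup>+"
proof -
  have "finite E" using finite_subset[OF edges_subset] finite_V by blast
  then have "wf ((E\<inverse>)\<^sup>+)" using acyclic_E by (intro wf_trancl finite_acyclic_wf_converse)
  then have "wf ((E\<^sup>+)\<inverse>)" by (simp add: trancl_converse)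
  then obtain c where "c \<in> Q" "\<And>q. (q, c) \<in> (E\<^sup>+)\<inverse> \<Longrightarrow> q \<notin> Q"
    using assms wf_eq_minimal[of "(E\<^sup>+)\<inverse>"] by blast
  then show ?thesis by blast
qed

lemma local_markov_cond_exp_agree:
  assumes v: "v \<in> V" and T: "pa E v \<subseteq> T" "T \<subseteq> V - de V E v"
  shows "cond_exp_agree M (\<F> T) (\<F> (pa E v)) (sets (\<F> {v}))"
proof -
  let ?ND = "V - de V E v - pa E v"
  have ND: "?ND \<union> pa E v = V - de V E v" using pa_subset pa_not_de by auto
  have "cond_indep M (\<F> {v}) (\<F> ?ND) (\<F> (pa E v))"
    using markov v unfolding local_markov_def by blast
  then have "cond_exp_agree M (\<F> (?ND \<union> pa E v)) (\<F> (pa E v)) (sets (\<F> {v}))"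
    using v pa_subset by (intro cond_exp_agree_of_cond_indep) auto
  then have agree: "cond_exp_agree M (\<F> (V - de V E v)) (\<F> (pa E v)) (sets (\<F> {v}))"
    unfolding ND .
  show ?thesis
    by (rule cond_exp_agree_mono[OF subalgebra_gen subalgebra_gen subalgebra_gen subalgebra_gen_mono
          subalgebra_gen_mono agree])
      (use v T pa_subset subalgebra_gen[of "{v}"] in \<open>auto simp: subalgebra_def\<close>)
qed

lemma real_cond_exp_Int_local_markov:
  assumes c: "c \<in> V" "pa E c \<subseteq> T" "T \<subseteq> V - de V E c"
    and D1: "D1 \<in> sets (\<F> T)" and D2: "D2 \<in> sets (\<F> {c})"
  shows "AE x in M. real_cond_exp M (\<F> T) (indicator (D1 \<inter> D2)) x
                 = indicator D1 x * real_cond_exp M (\<F> (pa E c)) (indicator D2) x"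
proof -
  interpret T: sigma_finite_subalgebra M "\<F> T"
    using c by (intro sigma_finite_subalgebra_of_subalgebra subalgebra_gen) auto
  have [measurable]: "D1 \<in> sets M" "D2 \<in> sets M"
    using D1 D2 c subalgebra_gen[of T] subalgebra_gen[of "{c}"] by (auto simp: subalgebra_def)
  have ind: "indicator (D1 \<inter> D2) = (\<lambda>x. indicator D1 x * indicator D2 x :: real)"
    by (simp add: fun_eq_iff indicator_inter_arith)
  have "AE x in M. real_cond_exp M (\<F> T) (\<lambda>x. indicator D1 x * indicator D2 x) x
                          = indicator D1 x * real_cond_exp M (\<F> T) (indicator D2) x"
    using D1 integrable_mult_indicator[OF \<open>D1 \<in> sets M\<close> integrable_indicator_real[OF \<open>D2 \<in> sets M\<close>]]
    by (intro T.real_cond_exp_mult) simp_all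
  moreover have "AE x in M. real_cond_exp M (\<F> T) (indicator D2) x = real_cond_exp M (\<F> (pa E c)) (indicator D2) x"
    using local_markov_cond_exp_agree[OF c] D2 unfolding cond_exp_agree_def by blast
  ultimately show ?thesis unfolding ind by eventually_elim simp
qed

lemma cond_exp_agree_insert:
  assumes c: "c \<in> V" and pa_c: "pa E c \<subseteq> Q \<union> R" and nondesc: "Q \<union> T \<subseteq> V - de V E c"
    and RT: "R \<subseteq> T" and agree: "cond_exp_agree M (\<F> T) (\<F> R) (sets (\<F> (Q \<union> R)))"
  shows "cond_exp_agree M (\<F> T) (\<F> R) (sets (\<F> (insert c (Q \<union> R))))"
proof -
  have QTV: "Q \<union> T \<subseteq> V" and QRV: "Q \<union> R \<subseteq> V" using nondesc RT by auto
  have "cond_exp_agree M (\<F> T) (\<F> R) (rectangles (Q \<union> R) {c})"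
    unfolding cond_exp_agree_def
  proof
    fix D assume "D \<in> rectangles (Q \<union> R) {c}"
    then obtain D1 D2 where D: "D = D1 \<inter> D2" and D1: "D1 \<in> sets (\<F> (Q \<union> R))" and D2: "D2 \<in> sets (\<F> {c})"
      unfolding rectangles_def by auto
    interpret Pa: sigma_finite_subalgebra M "\<F> (pa E c)"
      by (intro sigma_finite_subalgebra_of_subalgebra subalgebra_gen pa_subset)
    \<comment> \<open>The local Markov property replaces the indicator of the event D2 of c by its
      conditional expectation given pa c, which is measurable with respect to Q \<union> R.\<close>
    let ?f = "\<lambda>x. indicator D1 x * real_cond_exp M (\<F> (pa E c)) (indicator D2) x"
    have [measurable]: "D1 \<in> sets M" "D2 \<in> sets M"
      using D1 D2 c QRV subalgebra_gen[of "Q \<union> R"] subalgebra_gen[of "{c}"] by (auto simp: subalgebra_def)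
    have f_int: "integrable M ?f"
      using integrable_mult_indicator[OF \<open>D1 \<in> sets M\<close> Pa.real_cond_exp_int(1)[of "indicator D2"]] by simp
    have f_meas: "?f \<in> borel_measurable (\<F> (Q \<union> R))"
      using D1 measurable_gen_mono[OF pa_c borel_measurable_cond_exp] by simp
    have tower: "AE x in M. real_cond_exp M (\<F> T') (indicator D) x = real_cond_exp M (\<F> T') ?f x"
      if "T' \<subseteq> Q \<union> T" for T'
    proof (rule real_cond_exp_gen_tower[OF that QTV])
      show "AE x in M. real_cond_exp M (\<F> (Q \<union> T)) (indicator D) x = ?f x"
        unfolding D using c pa_c nondesc RT sets_gen_mono[OF _ D1, of "Q \<union> T"] D2
        by (intro real_cond_exp_Int_local_markov) auto
    qed (simp_all add: D)
    have "AE x in M. real_cond_exp M (\<F> T) ?f x = real_cond_exp M (\<F> R) ?f x"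
      using RT QTV QRV
      by (intro real_cond_exp_eq_of_cond_exp_agree[OF _ _ _ _ _ agree f_int f_meas]
          subalgebra_gen subalgebra_gen_mono) auto
    moreover have "AE x in M. real_cond_exp M (\<F> T) (indicator D) x = real_cond_exp M (\<F> T) ?f x"
      by (rule tower) auto
    moreover have "AE x in M. real_cond_exp M (\<F> R) (indicator D) x = real_cond_exp M (\<F> R) ?f x"
      by (rule tower) (use RT in auto)
    ultimately show "AE x in M. real_cond_exp M (\<F> T) (indicator D) x = real_cond_exp M (\<F> R) (indicator D) x"
      by eventually_elim simp
  qed
  then show ?thesis
    using sets_gen_Un[of "Q \<union> R" "{c}"] RT QTV QRV c
    by (simp add: cond_exp_agree_sigma_sets subalgebra_gen subalgebra_gen_mono
        Int_stable_rectangles rectangles_subset_sets space_in_rectangles)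
qed

lemma cond_exp_agree_parent_closed:
  assumes "finite Q" "Q \<subseteq> V" and RT: "R \<subseteq> T" "T \<subseteq> V"
    and "\<And>c. c \<in> Q \<Longrightarrow> pa E c \<subseteq> Q \<union> R"
    and "\<And>c. c \<in> Q \<Longrightarrow> T \<subseteq> V - de V E c"
  shows "cond_exp_agree M (\<F> T) (\<F> R) (sets (\<F> (Q \<union> R)))"
  using assms(1,2,5,6)
proof (induction Q rule: finite_remove_induct)
  case empty
  then show ?case
    using RT by (simp add: cond_exp_agree_self subalgebra_gen subalgebra_gen_mono)
next
  case (remove Q)
  \<comment> \<open>Remove a vertex c without descendants in Q: all of Q - {c} and T are non-descendants of c.\<close>
  obtain c where c: "c \<in> Q" and maximal: "\<And>q. q \<in> Q \<Longrightarrow> (c, q) \<notin> E\<^sup>+"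
    using exists_maximal[OF remove.hyps(2)] by blast
  have "pa E q \<subseteq> (Q - {c}) \<union> R" if "q \<in> Q - {c}" for q
    using remove.prems(2)[of q] that maximal[of q] unfolding pa_def by auto
  then have IH: "cond_exp_agree M (\<F> T) (\<F> R) (sets (\<F> ((Q - {c}) \<union> R)))"
    using remove.IH[OF c] remove.prems by auto
  have "Q - {c} \<subseteq> V - de V E c"
    using maximal remove.prems(1) unfolding de_def by (auto simp: rtrancl_eq_or_trancl)
  then have "cond_exp_agree M (\<F> T) (\<F> R) (sets (\<F> (insert c ((Q - {c}) \<union> R))))"
    using c remove.prems not_in_pa_self RT by (intro cond_exp_agree_insert IH) auto
  moreover have "insert c ((Q - {c}) \<union> R) = Q \<union> R" using c by auto
  ultimately show ?case by simp
qed

end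

section \<open>Adjustment sets and inverse probability weighting\<close>

locale treatment_outcome = bayes_net M N X V E
  for M :: "'a measure" and N :: "'v \<Rightarrow> 'b measure" and X V E +
  fixes A Y :: 'v
  assumes A_V: "A \<in> V" and Y_V: "Y \<in> V" and A_ne_Y: "A \<noteq> Y" and A_anc_Y: "(A, Y) \<in> E\<^sup>*"
begin

abbreviation "\<W> \<equiv> nondesc V E A"
abbreviation "\<C> \<equiv> cn V E A Y"
abbreviation "\<O> \<equiv> Oset V E A Y"

lemma Y_in_C: "Y \<in> \<C>"
  unfolding cn_def using Y_V A_ne_Y A_anc_Y by auto

lemma C_subset: "\<C> \<subseteq> V"
  unfolding cn_def by auto

lemma W_subset: "\<W> \<subseteq> V"
  unfolding nondesc_def by auto

lemma C_subset_de_set: "\<C> \<subseteq> de_set V E \<C>"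
  unfolding de_set_def de_def using C_subset by auto

lemma O_subset_W: "\<O> \<subseteq> \<W>"
proof
  fix z assume z: "z \<in> \<O>"
  then obtain c where c: "c \<in> \<C>" "(z, c) \<in> E" and z_nd: "z \<notin> de_set V E \<C>" "z \<noteq> A"
    unfolding Oset_def pa_set_def pa_def by auto
  have "z \<in> V" using c edges_subset by auto
  moreover have "(z, Y) \<in> E\<^sup>*" using c unfolding cn_def by auto
  ultimately have "(A, z) \<notin> E\<^sup>*" using z_nd C_subset_de_set unfolding cn_def by auto
  then show "z \<in> \<W>" using \<open>z \<in> V\<close> unfolding nondesc_def de_def by auto
qed

lemma O_subset: "\<O> \<subseteq> V"
  using O_subset_W W_subset by auto

lemma pa_subset_W: "w \<in> insert A \<W> \<Longrightarrow> pa E w \<subseteq> \<W>"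
  using pa_subset pa_not_de[of _ A] unfolding nondesc_def de_def pa_def
  by (auto intro: rtrancl_into_rtrancl)

lemma pa_C_subset: "c \<in> \<C> \<Longrightarrow> pa E c \<subseteq> \<C> \<union> (\<O> \<union> {A})"
  using pa_subset unfolding Oset_def pa_set_def de_set_def de_def cn_def pa_def
  by (auto intro: rtrancl_trans converse_rtrancl_into_rtrancl)

lemma W_A_subset_nondesc_C: "c \<in> \<C> \<Longrightarrow> \<W> \<union> {A} \<subseteq> V - de V E c"
  using A_V acyclic_E unfolding cn_def nondesc_def de_def acyclic_def
  by (auto intro: rtrancl_trans dest: rtrancl_eq_or_trancl[THEN iffD1] trancl_rtrancl_trancl)

lemma cond_exp_agree_causal_nodes:
  "cond_exp_agree M (\<F> (\<W> \<union> {A})) (\<F> (\<O> \<union> {A})) (sets (\<F> (\<C> \<union> (\<O> \<union> {A}))))"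
  using finite_subset[OF C_subset finite_V] C_subset O_subset_W W_subset A_V pa_C_subset W_A_subset_nondesc_C
  by (intro cond_exp_agree_parent_closed) auto

lemma real_cond_exp_causal_measurable_eq:
  assumes "integrable M f" and "f \<in> borel_measurable (\<F> (\<C> \<union> (\<O> \<union> {A})))"
  shows "AE x in M. real_cond_exp M (\<F> (\<W> \<union> {A})) f x = real_cond_exp M (\<F> (\<O> \<union> {A})) f x"
  using assms C_subset O_subset_W W_subset A_V
  by (intro real_cond_exp_eq_of_cond_exp_agree[OF _ _ _ _ _ cond_exp_agree_causal_nodes]
      subalgebra_gen subalgebra_gen_mono) auto

lemma real_cond_exp_nondesc_measurable_eq:
  assumes "integrable M g" and "g \<in> borel_measurable (\<F> (\<W> \<union> {A}))"
  shows "AE x in M. real_cond_exp M (\<F> (\<C> \<union> (\<O> \<union> {A}))) g x = real_cond_exp M (\<F> (\<O> \<union> {A})) g x"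
proof -
  have sub: "subalgebra M (\<F> (\<W> \<union> {A}))" "subalgebra M (\<F> (\<O> \<union> {A}))"
    "subalgebra M (\<F> (\<C> \<union> (\<O> \<union> {A})))"
    using C_subset O_subset W_subset A_V by (auto intro: subalgebra_gen)
  have "cond_exp_agree M (\<F> (\<C> \<union> (\<O> \<union> {A}))) (\<F> (\<O> \<union> {A})) (sets (\<F> (\<W> \<union> {A})))"
    using O_subset_W
    by (intro cond_exp_agree_sym[OF sub _ cond_exp_agree_causal_nodes] subalgebra_gen_mono) auto
  then show ?thesis
    using assms O_subset_W
    by (intro real_cond_exp_eq_of_cond_exp_agree[OF sub(3,2,1)] subalgebra_gen_mono) auto
qed

end

locale ipw_estimands = treatment_outcome M N X V E A Y
  for M :: "'a measure" and N :: "'v \<Rightarrow> 'b measure" and X V E A Y +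
  fixes a :: 'b and y :: "'b \<Rightarrow> real"
  assumes a_sets: "{a} \<in> sets (N A)" and y_measurable: "y \<in> borel_measurable (N Y)"
    and y_integrable: "integrable M (\<lambda>\<omega>. y (X Y \<omega>))"
    and prop_score_pa_pos: "AE \<omega> in M. 0 < prop_score M N X A a (pa E A) \<omega>"
    and J_integrable: "integrable M (Jest M N X E A a Y y)"
begin

abbreviation "Ia \<equiv> Ind X A a"
abbreviation "Yv \<equiv> \<lambda>\<omega>. y (X Y \<omega>)"
abbreviation "pi_pa \<equiv> prop_score M N X A a (pa E A)"
abbreviation "pi_O \<equiv> prop_score M N X A a \<O>"
abbreviation "J \<equiv> Jest M N X E A a Y y"
abbreviation "T \<equiv> Test M N X V E A a Y y"
abbreviation "b \<equiv> breg M N X A a Y y \<O>"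

lemma Ia_measurable_gen: "A \<in> S \<Longrightarrow> S \<subseteq> V \<Longrightarrow> Ia \<in> borel_measurable (\<F> S)"
  using Ind_measurable_gen a_sets by auto

lemma Ia_measurable [measurable]: "Ia \<in> borel_measurable M"
  using measurable_from_subalg[OF subalgebra_gen Ia_measurable_gen, of "{A}"] A_V by auto

lemma Ia_integrable: "integrable M Ia"
  using Ind_integrable[OF A_V a_sets] .

lemma Yv_measurable_gen: "Y \<in> S \<Longrightarrow> S \<subseteq> V \<Longrightarrow> Yv \<in> borel_measurable (\<F> S)"
  by (rule measurable_compose[OF measurable_X_gen y_measurable]) auto

lemma Yv_measurable [measurable]: "Yv \<in> borel_measurable M"
  using y_integrable by simp

lemma prop_score_measurable [measurable]: "prop_score M N X A a S \<in> borel_measurable M"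
  unfolding prop_score_def by simp

lemma real_cond_exp_Ia_nondesc: "AE x in M. real_cond_exp M (\<F> \<W>) Ia x = pi_pa x"
proof -
  interpret W: sigma_finite_subalgebra M "\<F> \<W>"
    using W_subset by (intro sigma_finite_subalgebra_of_subalgebra subalgebra_gen)
  interpret Pa: sigma_finite_subalgebra M "\<F> (pa E A)"
    by (intro sigma_finite_subalgebra_of_subalgebra subalgebra_gen pa_subset)
  let ?D = "X A -` {a} \<inter> space M"
  have D: "?D \<in> sets (\<F> {A})" using sets_gen_singleton[OF A_V] a_sets by auto
  then have [measurable]: "?D \<in> sets M" using subalgebra_gen[of "{A}"] A_V by (auto simp: subalgebra_def)
  have "AE x in M. real_cond_exp M (\<F> \<W>) (indicator ?D) x = pi_pa x"
  proof -
    have "cond_exp_agree M (\<F> \<W>) (\<F> (pa E A)) (sets (\<F> {A}))"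
      using pa_subset_W[of A] by (intro local_markov_cond_exp_agree A_V) (auto simp: nondesc_def)
    moreover have "AE x in M. indicator ?D x = Ia x" by (auto simp: Ind_def)
    then have "AE x in M. real_cond_exp M (\<F> (pa E A)) (indicator ?D) x = pi_pa x"
      unfolding prop_score_def by (intro Pa.real_cond_exp_cong) auto
    ultimately show ?thesis using D unfolding cond_exp_agree_def by (auto elim: eventually_elim2)
  qed
  moreover have "AE x in M. real_cond_exp M (\<F> \<W>) Ia x = real_cond_exp M (\<F> \<W>) (indicator ?D) x"
    by (intro W.real_cond_exp_cong) (auto simp: Ind_def)
  ultimately show ?thesis by eventually_elim simp
qed

lemma pi_O_pos: "AE x in M. 0 < pi_O x"
proof -
  interpret O: sigma_finite_subalgebra M "\<F> \<O>"
    using O_subset by (intro sigma_finite_subalgebra_of_subalgebra subalgebra_gen)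
  interpret Pa: sigma_finite_subalgebra M "\<F> (pa E A)"
    by (intro sigma_finite_subalgebra_of_subalgebra subalgebra_gen pa_subset)
  have "AE x in M. pi_O x = real_cond_exp M (\<F> \<O>) pi_pa x"
    unfolding prop_score_def[of _ _ _ _ _ \<O>]
    using O_subset_W W_subset Ia_integrable real_cond_exp_Ia_nondesc by (intro real_cond_exp_gen_tower) auto
  moreover have "AE x in M. 0 < real_cond_exp M (\<F> \<O>) pi_pa x"
    using prop_score_pa_pos Pa.real_cond_exp_int(1)[OF Ia_integrable]
    by (intro O.real_cond_exp_gr_c) (auto simp: prop_score_def)
  ultimately show ?thesis by eventually_elim simp
qed

lemma J_eq: "J = (\<lambda>x. Ia x / pi_pa x * Yv x)"
  by (simp add: fun_eq_iff Jest_def)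

lemma Ia_div_pi_pa_integrable: "integrable M (\<lambda>x. Ia x / pi_pa x)"
proof -
  interpret W: sigma_finite_subalgebra M "\<F> \<W>"
    using W_subset by (intro sigma_finite_subalgebra_of_subalgebra subalgebra_gen)
  have pos: "AE x in M. 0 < real_cond_exp M (\<F> \<W>) Ia x"
    using real_cond_exp_Ia_nondesc prop_score_pa_pos by eventually_elim simp
  have "AE x in M. real_cond_exp M (\<F> \<W>) (\<lambda>_. 1) x = 1"
    by (intro W.real_cond_exp_F_meas) simp_all
  then have "AE x in M. Ia x * (real_cond_exp M (\<F> \<W>) (\<lambda>_. 1) x / real_cond_exp M (\<F> \<W>) Ia x)
                     = Ia x / pi_pa x"
    using real_cond_exp_Ia_nondesc by eventually_elim simp
  moreover have "integrable M (\<lambda>x. Ia x * (real_cond_exp M (\<F> \<W>) (\<lambda>_. 1) x / real_cond_exp M (\<F> \<W>) Ia x))"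
    by (rule W.integrable_mult_real_cond_exp_ratio[OF Ia_integrable _ pos]) (simp_all add: Ind_def)
  ultimately show ?thesis
    by (rule integrable_cong_AE_imp[rotated 2]) simp
qed

lemma real_cond_exp_Ia_div_pi_pa_nondesc: "AE x in M. real_cond_exp M (\<F> \<W>) (\<lambda>x. Ia x / pi_pa x) x = 1"
proof -
  interpret W: sigma_finite_subalgebra M "\<F> \<W>"
    using W_subset by (intro sigma_finite_subalgebra_of_subalgebra subalgebra_gen)
  have "(\<lambda>x. 1 / pi_pa x) \<in> borel_measurable (\<F> \<W>)"
    using pa_subset_W[of A] by (intro borel_measurable_divide prop_score_measurable_gen) auto
  then have "AE x in M. real_cond_exp M (\<F> \<W>) (\<lambda>x. 1 / pi_pa x * Ia x) x
                     = 1 / pi_pa x * real_cond_exp M (\<F> \<W>) Ia x"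
    using Ia_div_pi_pa_integrable by (intro W.real_cond_exp_mult) simp_all
  then show ?thesis
    using real_cond_exp_Ia_nondesc prop_score_pa_pos by eventually_elim simp
qed

lemma Ia_div_pi_pa_measurable_gen: "(\<lambda>x. Ia x / pi_pa x) \<in> borel_measurable (\<F> (\<W> \<union> {A}))"
  using W_subset A_V pa_subset_W[of A]
  by (intro borel_measurable_divide Ia_measurable_gen prop_score_measurable_gen) auto

lemma real_cond_exp_J_nondesc_treatment:
  "AE x in M. real_cond_exp M (\<F> (\<W> \<union> {A})) J x = b x / pi_pa x * Ia x"
proof -
  let ?WA = "\<W> \<union> {A}" and ?OA = "\<O> \<union> {A}"
  interpret WA: sigma_finite_subalgebra M "\<F> ?WA"
    using W_subset A_V by (intro sigma_finite_subalgebra_of_subalgebra subalgebra_gen) auto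
  interpret OA: sigma_finite_subalgebra M "\<F> ?OA"
    using O_subset A_V by (intro sigma_finite_subalgebra_of_subalgebra subalgebra_gen) auto
  have IaYv_int: "integrable M (\<lambda>x. Ia x * Yv x)"
    by (rule Bochner_Integration.integrable_bound[OF y_integrable]) (simp, simp add: Ind_def)
  have "AE x in M. real_cond_exp M (\<F> ?WA) J x = Ia x / pi_pa x * real_cond_exp M (\<F> ?WA) Yv x"
    unfolding J_eq using J_integrable
    by (intro WA.real_cond_exp_mult Ia_div_pi_pa_measurable_gen) (simp_all add: J_eq)
  moreover have "AE x in M. real_cond_exp M (\<F> ?WA) Yv x = real_cond_exp M (\<F> ?OA) Yv x"
    using y_integrable Y_in_C C_subset O_subset A_V
    by (intro real_cond_exp_causal_measurable_eq Yv_measurable_gen) auto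
  moreover have "AE x in M. real_cond_exp M (\<F> ?OA) (\<lambda>x. Ia x * Yv x) x = Ia x * real_cond_exp M (\<F> ?OA) Yv x"
    using IaYv_int O_subset A_V by (intro OA.real_cond_exp_mult Ia_measurable_gen) auto
  moreover have "AE x in M. real_cond_exp M (\<F> ?OA) (\<lambda>x. Ia x * Yv x) x = Ia x * b x"
    unfolding breg_def using real_cond_exp_Ind_mult[OF A_V a_sets O_subset pi_O_pos _ IaYv_int]
    by simp
  ultimately show ?thesis by eventually_elim (auto simp: Ind_def)
qed

lemma real_cond_exp_J_nondesc: "AE x in M. real_cond_exp M (\<F> \<W>) J x = b x"
proof -
  interpret W: sigma_finite_subalgebra M "\<F> \<W>"
    using W_subset by (intro sigma_finite_subalgebra_of_subalgebra subalgebra_gen)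
  let ?f = "\<lambda>x. b x / pi_pa x"
  have f_meas: "?f \<in> borel_measurable (\<F> \<W>)"
    using O_subset_W pa_subset_W[of A]
    by (intro borel_measurable_divide breg_measurable_gen prop_score_measurable_gen) auto
  have "integrable M (real_cond_exp M (\<F> (\<W> \<union> {A})) J)"
    by (intro sigma_finite_subalgebra.real_cond_exp_int(1)[OF _ J_integrable]
        sigma_finite_subalgebra_of_subalgebra subalgebra_gen) (use W_subset A_V in auto)
  then have f_int: "integrable M (\<lambda>x. ?f x * Ia x)"
    by (rule integrable_cong_AE_imp[OF _ _ real_cond_exp_J_nondesc_treatment])
      (simp add: breg_def prop_score_def)
  have "AE x in M. real_cond_exp M (\<F> \<W>) J x = real_cond_exp M (\<F> \<W>) (\<lambda>x. ?f x * Ia x) x"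
    using W_subset A_V J_integrable real_cond_exp_J_nondesc_treatment
    by (intro real_cond_exp_gen_tower) (auto simp: breg_def prop_score_def)
  moreover have "AE x in M. real_cond_exp M (\<F> \<W>) (\<lambda>x. ?f x * Ia x) x = ?f x * real_cond_exp M (\<F> \<W>) Ia x"
    using f_meas f_int by (intro W.real_cond_exp_mult) simp_all
  ultimately show ?thesis
    using real_cond_exp_Ia_nondesc prop_score_pa_pos by eventually_elim simp
qed

lemma real_cond_exp_J_causal:
  "AE x in M. real_cond_exp M (\<F> (\<C> \<union> (\<O> \<union> {A}))) J x = T x"
proof -
  let ?H = "\<C> \<union> (\<O> \<union> {A})" and ?q = "\<lambda>x. Ia x / pi_pa x"
  interpret H: sigma_finite_subalgebra M "\<F> ?H"
    using C_subset O_subset A_V by (intro sigma_finite_subalgebra_of_subalgebra subalgebra_gen) auto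
  interpret O: sigma_finite_subalgebra M "\<F> \<O>"
    using O_subset by (intro sigma_finite_subalgebra_of_subalgebra subalgebra_gen)
  have "AE x in M. real_cond_exp M (\<F> ?H) (\<lambda>x. Yv x * ?q x) x = Yv x * real_cond_exp M (\<F> ?H) ?q x"
    using J_integrable Y_in_C C_subset O_subset A_V
    by (intro H.real_cond_exp_mult Yv_measurable_gen) (auto simp: J_eq mult.commute)
  moreover have "AE x in M. real_cond_exp M (\<F> ?H) ?q x = real_cond_exp M (\<F> (\<O> \<union> {A})) ?q x"
    by (rule real_cond_exp_nondesc_measurable_eq[OF Ia_div_pi_pa_integrable Ia_div_pi_pa_measurable_gen])
  moreover have "AE x in M. real_cond_exp M (\<F> (\<O> \<union> {A})) ?q x = Ia x * (real_cond_exp M (\<F> \<O>) ?q x / pi_O x)"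
    using real_cond_exp_Ind_mult[OF A_V a_sets O_subset pi_O_pos, of "\<lambda>x. 1 / pi_pa x"]
      Ia_div_pi_pa_integrable by simp
  moreover have "AE x in M. real_cond_exp M (\<F> \<O>) ?q x = real_cond_exp M (\<F> \<O>) (\<lambda>_. 1) x"
    using O_subset_W W_subset Ia_div_pi_pa_integrable real_cond_exp_Ia_div_pi_pa_nondesc
    by (intro real_cond_exp_gen_tower) auto
  moreover have "AE x in M. real_cond_exp M (\<F> \<O>) (\<lambda>_. 1) x = 1"
    by (intro O.real_cond_exp_F_meas) simp_all
  ultimately show ?thesis
    unfolding J_eq by eventually_elim (simp add: Test_def mult.commute)
qed

lemma real_cond_exp_J_family_nondesc:
  assumes "w \<in> \<W>"
  shows "AE x in M. real_cond_exp M (\<F> ({w} \<union> pa E w)) J x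
                  = real_cond_exp M (\<F> ({w} \<union> pa E w)) (b) x"
  using assms pa_subset_W[of w] W_subset O_subset
  by (intro real_cond_exp_gen_tower[OF _ _ J_integrable real_cond_exp_J_nondesc]
      measurable_from_subalg[OF subalgebra_gen breg_measurable_gen]) auto

lemma real_cond_exp_J_family_causal:
  assumes "c \<in> \<C>"
  shows "AE x in M. real_cond_exp M (\<F> ({c} \<union> pa E c)) J x
                  = real_cond_exp M (\<F> ({c} \<union> pa E c)) (T) x"
  using assms pa_C_subset[of c] C_subset O_subset A_V
  by (intro real_cond_exp_gen_tower[OF _ _ J_integrable real_cond_exp_J_causal]) (auto simp: Test_def)

end

theorem lemma6:
  fixes M :: "'a measure" and N :: "'v \<Rightarrow> 'b measure" and X :: "'v \<Rightarrow> 'a \<Rightarrow> 'b"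
    and V :: "'v set" and E :: "('v \<times> 'v) set" and A Y :: 'v and a :: 'b and y :: "'b \<Rightarrow> real"
  assumes "prob_space M"
    and "is_DAG V E"
    and "\<And>v. v \<in> V \<Longrightarrow> X v \<in> measurable M (N v)"
    and "local_markov M N X V E"
    and "A \<in> V" and "Y \<in> V" and "A \<noteq> Y"
    and "countable (space (N A))" and "sets (N A) = Pow (space (N A))" and "a \<in> space (N A)"
    and "y \<in> borel_measurable (N Y)"
    and "integrable M (\<lambda>\<omega>. y (X Y \<omega>))"
    and "AE \<omega> in M. prop_score M N X A a (pa E A) \<omega> > 0"
    and "integrable M (Jest M N X E A a Y y)"
    and "integrable M (Test M N X V E A a Y y)"
    and "irrel V E A Y = {}"
  shows "(\<forall>w \<in> nondesc V E A.
            AE \<omega> in M. real_cond_exp M (gen M N X ({w} \<union> pa E w)) (Jest M N X E A a Y y) \<omega>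
                       = real_cond_exp M (gen M N X ({w} \<union> pa E w)) (breg M N X A a Y y (Oset V E A Y)) \<omega>)
       \<and> (\<forall>m \<in> mediators V E A Y.
            AE \<omega> in M. real_cond_exp M (gen M N X ({m} \<union> pa E m)) (Jest M N X E A a Y y) \<omega>
                       = real_cond_exp M (gen M N X ({m} \<union> pa E m)) (Test M N X V E A a Y y) \<omega>)
       \<and> (AE \<omega> in M. real_cond_exp M (gen M N X ({Y} \<union> pa E Y)) (Jest M N X E A a Y y) \<omega>
                       = real_cond_exp M (gen M N X ({Y} \<union> pa E Y)) (Test M N X V E A a Y y) \<omega>)"
proof -
  have "(A, Y) \<in> E\<^sup>*"
    using \<open>irrel V E A Y = {}\<close> \<open>A \<in> V\<close> unfolding irrel_def an_def by blast
  moreover have "{a} \<in> sets (N A)"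
    using \<open>sets (N A) = Pow (space (N A))\<close> \<open>a \<in> space (N A)\<close> by simp
  ultimately interpret ipw_estimands M N X V E A Y a y
    using assms
    by (intro ipw_estimands.intro treatment_outcome.intro bayes_net.intro vertex_variables.intro
        ipw_estimands_axioms.intro treatment_outcome_axioms.intro bayes_net_axioms.intro
        vertex_variables_axioms.intro) simp_all
  show ?thesis
  proof (intro conjI ballI)
    fix w assume "w \<in> nondesc V E A"
    then show "AE \<omega> in M. real_cond_exp M (\<F> ({w} \<union> pa E w)) J \<omega>
                       = real_cond_exp M (\<F> ({w} \<union> pa E w)) b \<omega>"
      by (rule real_cond_exp_J_family_nondesc)
  next
    fix m assume "m \<in> mediators V E A Y"
    then show "AE \<omega> in M. real_cond_exp M (\<F> ({m} \<union> pa E m)) J \<omega>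
                       = real_cond_exp M (\<F> ({m} \<union> pa E m)) T \<omega>"
      unfolding mediators_def by (intro real_cond_exp_J_family_causal) simp
  qed (rule real_cond_exp_J_family_causal[OF Y_in_C])
qed

end
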